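(* Let $f:\mathbb{R}^M\times\Theta\to\mathbb{R}^N$ (with $N\ge 1$) be a network whose first layer is linear, i.e. $f(\mathbf{x};\boldsymbol{\theta})=g(\mathbf{W}\mathbf{x};\bar{\boldsymbol{\theta}})$ with parameters $\boldsymbol{\theta}=(\mathbf{W},\bar{\boldsymbol{\theta}})$, $\mathbf{W}\in\mathbb{R}^{d\times M}$, and $g$ differentiable in its first argument and twice differentiable in the parameters. Let $(\mathbf{x}_i,\mathbf{y}_i)_{i=1}^n$ be training data with $\mathbf{x}_i\neq 0$, and let $\boldsymbol{\theta}^*$ be an exact interpolation solution, i.e. $f(\mathbf{x}_i;\boldsymbol{\theta}^* )=\mathbf{y}_i$ for all $i$, with first-layer weight $\mathbf{W}$. Then $$dV_{f(\boldsymbol{\theta}^* )}\le \frac{N^{-N/2}}{n}\sum_{i=1}^n\|J_f(\mathbf{x}_i)\|_F^N\le \frac{1}{n}\sqrt{\sum_{i=1}^n\frac{\|\mathbf{W}\|_2^{2N}}{\|\mathbf{x}_i\|_2^{2N}}}\left(\frac{n\,S(\boldsymbol{\theta}^* )}{N}\right)^{N/2}.$$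
   Context: The loss is the quadratic loss $L(\boldsymbol{\theta})=\frac1n\sum_{i=1}^n\frac12\|f(\mathbf{x}_i;\boldsymbol{\theta})-\mathbf{y}_i\|_2^2$, and the sharpness is $S(\boldsymbol{\theta})=\operatorname{Tr}(\nabla^2_{\boldsymbol{\theta}}L(\boldsymbol{\theta}))$. $J_f(\mathbf{x})\in\mathbb{R}^{N\times M}$ denotes the Jacobian of $\mathbf{x}\mapsto f(\mathbf{x};\boldsymbol{\theta}^* )$ at $\mathbf{x}$. The local volumetric ratio at $\mathbf{x}$ is $d\mathrm{vol}|_{f(\mathbf{x},\boldsymbol{\theta}^* )}=\sqrt{\det(J_f(\mathbf{x})J_f(\mathbf{x})^{T})}$ (the product of the singular values of $J_f(\mathbf{x})$), and the Local Volumetric Ratio (LVR) of the network is $dV_{f(\boldsymbol{\theta}^* )}=\frac1n\sum_{i=1}^n d\mathrm{vol}|_{f(\mathbf{x}_i,\boldsymbol{\theta}^* )}$. $\|\cdot\|_2$ is the Euclidean norm for vectors and spectral norm for matrices; $\|\cdot\|_F$ is the Frobenius norm. *)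

theory Defs
  imports "HOL-Analysis.Analysis"
begin

definition net :: "(real^'d \<Rightarrow> 'q \<Rightarrow> real^'N) \<Rightarrow> real^'m \<Rightarrow> (real^'m^'d) \<times> 'q \<Rightarrow> real^'N" where
  "net g x \<theta> = g (fst \<theta> *v x) (snd \<theta>)"

definition quad_loss :: "(real^'m \<Rightarrow> 'p \<Rightarrow> real^'N) \<Rightarrow> (nat \<Rightarrow> real^'m) \<Rightarrow> (nat \<Rightarrow> real^'N) \<Rightarrow> nat \<Rightarrow> 'p \<Rightarrow> real" where
  "quad_loss f xs ys n \<theta> = (1 / real n) * (\<Sum>i<n. (1/2) * (norm (f (xs i) \<theta> - ys i))\<^sup>2)"

definition hess_trace :: "('p::euclidean_space \<Rightarrow> real) \<Rightarrow> 'p \<Rightarrow> real" where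
  "hess_trace L \<theta> = (\<Sum>b\<in>Basis. deriv (\<lambda>s. deriv (\<lambda>t. L (\<theta> + t *\<^sub>R b)) s) 0)"

definition sharpness :: "(real^'m \<Rightarrow> 'p::euclidean_space \<Rightarrow> real^'N) \<Rightarrow> (nat \<Rightarrow> real^'m) \<Rightarrow> (nat \<Rightarrow> real^'N) \<Rightarrow> nat \<Rightarrow> 'p \<Rightarrow> real" where
  "sharpness f xs ys n \<theta> = hess_trace (quad_loss f xs ys n) \<theta>"

definition input_jac :: "(real^'m \<Rightarrow> 'p \<Rightarrow> real^'N) \<Rightarrow> 'p \<Rightarrow> real^'m \<Rightarrow> real^'m^'N" where
  "input_jac f \<theta> x = jacobian (\<lambda>z. f z \<theta>) (at x)"

definition local_vol :: "real^'m^'N \<Rightarrow> real" where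
  "local_vol J = sqrt (det (J ** transpose J))"

definition LVR :: "(real^'m \<Rightarrow> 'p \<Rightarrow> real^'N) \<Rightarrow> 'p \<Rightarrow> (nat \<Rightarrow> real^'m) \<Rightarrow> nat \<Rightarrow> real" where
  "LVR f \<theta> xs n = (1 / real n) * (\<Sum>i<n. local_vol (input_jac f \<theta> (xs i)))"

definition frob_norm :: "real^'m^'N \<Rightarrow> real" where
  "frob_norm A = sqrt (\<Sum>i\<in>UNIV. \<Sum>j\<in>UNIV. (A $ i $ j)\<^sup>2)"

definition spec_norm :: "real^'m^'d \<Rightarrow> real" where
  "spec_norm W = onorm (\<lambda>x. W *v x)"

end

theory Submission
  imports Defs
begin

text \<open>
  First inequality: \<open>J J\<^sup>T\<close> is the Gram matrix of the rows of \<open>J\<close>, so by Hadamard's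
  inequality and AM-GM, \<open>det (J J\<^sup>T) \<le> \<Prod>\<^sub>i \<parallel>J\<^sub>i\<parallel>\<^sup>2 \<le> (\<parallel>J\<parallel>\<^sub>F\<^sup>2 / N)\<^sup>N\<close>.

  Second inequality: at an interpolating parameter all residuals vanish, so the Hessian of the
  quadratic loss is the Gauss-Newton matrix and its trace is \<open>(1/n) \<Sum>\<^sub>i \<parallel>\<partial>\<^sub>\<theta> f(x\<^sub>i)\<parallel>\<^sub>F\<^sup>2\<close>.
  Keeping only the first-layer directions, where \<open>\<partial>\<^sub>W f(x\<^sub>i)[U] = J\<^sub>g(W x\<^sub>i) U x\<^sub>i\<close>, gives
  \<open>n S \<ge> \<Sum>\<^sub>i \<parallel>x\<^sub>i\<parallel>\<^sup>2 \<parallel>J\<^sub>g(W x\<^sub>i)\<parallel>\<^sub>F\<^sup>2\<close>. On the other hand \<open>J\<^sub>f(x\<^sub>i) = J\<^sub>g(W x\<^sub>i) W\<close>, hence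
  \<open>\<parallel>J\<^sub>f(x\<^sub>i)\<parallel>\<^sub>F\<^sup>2 \<le> (\<parallel>W\<parallel>\<^sub>2\<^sup>2 / \<parallel>x\<^sub>i\<parallel>\<^sup>2) \<cdot> \<parallel>x\<^sub>i\<parallel>\<^sup>2 \<parallel>J\<^sub>g(W x\<^sub>i)\<parallel>\<^sub>F\<^sup>2\<close>. Raising this to the power
  \<open>N/2\<close>, Cauchy-Schwarz over \<open>i\<close> and \<open>\<Sum>\<^sub>i a\<^sub>i\<^sup>N \<le> (\<Sum>\<^sub>i a\<^sub>i)\<^sup>N\<close> conclude.
\<close>

lemma prod_le_mean_power:
  fixes x :: "'a \<Rightarrow> real"
  assumes "finite S" and nonneg: "\<And>i. i \<in> S \<Longrightarrow> 0 \<le> x i"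
  shows "(\<Prod>i\<in>S. x i) \<le> ((\<Sum>i\<in>S. x i) / card S) ^ card S"
proof (cases "S = {}")
  case True
  then show ?thesis by simp
next
  case False
  let ?P = "\<Prod>i\<in>S. x i"
  have "card S > 0"
    using \<open>finite S\<close> False by (simp add: card_gt_0_iff)
  have "0 \<le> ?P"
    using nonneg by (simp add: prod_nonneg)
  then have "?P = (?P powr (1 / card S)) powr card S"
    using \<open>card S > 0\<close> by (simp add: powr_powr)
  also have "\<dots> = (?P powr (1 / card S)) ^ card S"
    using \<open>card S > 0\<close> by (simp add: powr_realpow')
  also have "\<dots> \<le> ((\<Sum>i\<in>S. x i) / card S) ^ card S"
    using arith_geom_mean[OF \<open>finite S\<close> False nonneg]
    by (intro power_mono) (simp_all add: sum_divide_distrib)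
  finally show ?thesis .
qed

lemma powr_half_of_nat:
  fixes x :: real
  assumes "0 \<le> x" and "N > 0"
  shows "x powr (real N / 2) = sqrt (x ^ N)"
  using assms by (simp add: powr_half_sqrt_powr powr_realpow')

lemma sum_power_le_power_sum:
  fixes s :: "'a \<Rightarrow> real"
  assumes "finite I" and nonneg: "\<And>i. i \<in> I \<Longrightarrow> 0 \<le> s i" and "N > 0"
  shows "(\<Sum>i\<in>I. s i ^ N) \<le> (\<Sum>i\<in>I. s i) ^ N"
proof -
  let ?S = "\<Sum>i\<in>I. s i"
  have "s i ^ N \<le> s i * ?S ^ (N - 1)" if "i \<in> I" for i
  proof -
    have "s i \<le> ?S"
      using \<open>finite I\<close> nonneg that by (intro member_le_sum) auto
    then have "s i * s i ^ (N - 1) \<le> s i * ?S ^ (N - 1)"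
      using nonneg[OF that] by (intro mult_left_mono power_mono)
    then show ?thesis
      using \<open>N > 0\<close> by (simp add: power_eq_if)
  qed
  then have "(\<Sum>i\<in>I. s i ^ N) \<le> (\<Sum>i\<in>I. s i * ?S ^ (N - 1))"
    by (rule sum_mono)
  also have "\<dots> = ?S ^ N"
    using \<open>N > 0\<close> by (simp add: power_eq_if flip: sum_distrib_right)
  finally show ?thesis .
qed

lemma powr_neg_half_mult_sum_power_le:
  fixes F c s :: "'a \<Rightarrow> real"
  assumes "finite I" and c_nonneg: "\<And>i. i \<in> I \<Longrightarrow> 0 \<le> c i" and s_nonneg: "\<And>i. i \<in> I \<Longrightarrow> 0 \<le> s i"
    and F_le: "\<And>i. i \<in> I \<Longrightarrow> (F i)\<^sup>2 \<le> c i * s i"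
    and "(\<Sum>i\<in>I. s i) \<le> T" and "N > 0"
  shows "real N powr (- real N / 2) * (\<Sum>i\<in>I. F i ^ N)
           \<le> sqrt (\<Sum>i\<in>I. c i ^ N) * (T / real N) powr (real N / 2)"
proof -
  have sum_s_nonneg: "0 \<le> (\<Sum>i\<in>I. s i)"
    using s_nonneg by (simp add: sum_nonneg)
  have "(\<Sum>i\<in>I. s i ^ N) \<le> (\<Sum>i\<in>I. s i) ^ N"
    using \<open>finite I\<close> s_nonneg \<open>N > 0\<close> by (rule sum_power_le_power_sum)
  also have "\<dots> \<le> T ^ N"
    using \<open>(\<Sum>i\<in>I. s i) \<le> T\<close> sum_s_nonneg by (rule power_mono)
  finally have sum_power_le_T: "(\<Sum>i\<in>I. s i ^ N) \<le> T ^ N" .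
  have "F i ^ N \<le> sqrt (c i ^ N) * sqrt (s i ^ N)" if "i \<in> I" for i
  proof -
    have "((F i)\<^sup>2) ^ N = (F i ^ N)\<^sup>2"
      by (simp add: mult.commute flip: power_mult)
    then have "F i ^ N \<le> sqrt (((F i)\<^sup>2) ^ N)"
      by simp
    also have "\<dots> \<le> sqrt ((c i * s i) ^ N)"
      using F_le[OF that] by (intro real_sqrt_le_mono power_mono) simp_all
    finally show ?thesis
      by (simp add: power_mult_distrib real_sqrt_mult)
  qed
  then have "(\<Sum>i\<in>I. F i ^ N) \<le> (\<Sum>i\<in>I. sqrt (c i ^ N) * sqrt (s i ^ N))"
    by (rule sum_mono)
  also have "\<dots> = (\<Sum>i\<in>I. \<bar>sqrt (c i ^ N)\<bar> * \<bar>sqrt (s i ^ N)\<bar>)"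
    using c_nonneg s_nonneg by (intro sum.cong) simp_all
  also have "\<dots> \<le> L2_set (\<lambda>i. sqrt (c i ^ N)) I * L2_set (\<lambda>i. sqrt (s i ^ N)) I"
    by (rule L2_set_mult_ineq)
  also have "\<dots> = sqrt (\<Sum>i\<in>I. c i ^ N) * sqrt (\<Sum>i\<in>I. s i ^ N)"
    using c_nonneg s_nonneg by (simp add: L2_set_def)
  also have "\<dots> \<le> sqrt (\<Sum>i\<in>I. c i ^ N) * sqrt (T ^ N)"
    using sum_power_le_T by (intro mult_left_mono real_sqrt_le_mono) (simp_all add: c_nonneg sum_nonneg)
  finally have sum_le: "(\<Sum>i\<in>I. F i ^ N) \<le> sqrt (\<Sum>i\<in>I. c i ^ N) * sqrt (T ^ N)" .
  have "0 \<le> T"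
    using sum_s_nonneg \<open>(\<Sum>i\<in>I. s i) \<le> T\<close> by (rule order_trans)
  then have "(T / real N) powr (real N / 2) = sqrt (T ^ N) / sqrt (real N ^ N)"
    unfolding powr_half_of_nat[OF divide_nonneg_nonneg[OF \<open>0 \<le> T\<close> of_nat_0_le_iff] \<open>N > 0\<close>]
    by (simp only: power_divide real_sqrt_divide)
  moreover have "real N powr (- real N / 2) = 1 / sqrt (real N ^ N)"
    unfolding minus_divide_left[symmetric] powr_minus powr_half_of_nat[OF of_nat_0_le_iff \<open>N > 0\<close>]
    by (rule inverse_eq_divide)
  ultimately show ?thesis
    using sum_le by (simp add: divide_right_mono)
qed

section \<open>Hadamard's inequality for Gram determinants\<close>

lemma det_inner_matrix_subtract_span:
  fixes a b :: "'n::finite \<Rightarrow> 'a::real_inner"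
  assumes "y \<in> span {a j | j. j \<noteq> k}"
  shows "det (\<chi> i j. (a(k := a k - y)) i \<bullet> b j) = det (\<chi> i j. a i \<bullet> b j)"
proof -
  define G where "G = (\<chi> i j. a i \<bullet> b j)"
  define \<phi> where "\<phi> = (\<lambda>v. \<chi> j. v \<bullet> b j)"
  have "linear \<phi>"
    unfolding \<phi>_def by (auto simp: linear_iff vec_eq_iff inner_add_left)
  have row_G: "row j G = \<phi> (a j)" for j
    by (simp add: row_def G_def \<phi>_def vec_eq_iff)
  have "\<phi> (-y) \<in> span (\<phi> ` {a j | j. j \<noteq> k})"
    using span_linear_image[OF \<open>linear \<phi>\<close>] assms span_neg by blast
  moreover have "\<phi> ` {a j | j. j \<noteq> k} = {row j G | j. j \<noteq> k}"
    using row_G by auto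
  ultimately have "\<phi> (-y) \<in> vec.span {row j G | j. j \<noteq> k}"
    by (simp add: span_vec_eq)
  then have "det (\<chi> i. if i = k then row k G + \<phi> (-y) else row i G) = det G"
    by (rule det_row_span)
  moreover have "(\<chi> i j. (a(k := a k - y)) i \<bullet> b j)
      = (\<chi> i. if i = k then row k G + \<phi> (-y) else row i G)"
    by (simp add: vec_eq_iff row_G \<phi>_def inner_diff_left)
  ultimately show ?thesis
    by (simp add: G_def)
qed

lemma det_inner_matrix_self_orthogonalize:
  fixes a :: "'n::finite \<Rightarrow> 'a::euclidean_space"
  shows "\<exists>a'::'n \<Rightarrow> 'a. det (\<chi> i j. a' i \<bullet> a' j) = det (\<chi> i j. a i \<bullet> a j)
     \<and> (\<forall>i. norm (a' i) \<le> norm (a i)) \<and> (\<forall>i\<in>S. \<forall>j. j \<noteq> i \<longrightarrow> a' i \<bullet> a' j = 0)"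
proof (induction S rule: infinite_finite_induct)
  case (infinite S)
  then show ?case by simp
next
  case empty
  show ?case
    by (rule exI[where x = a]) simp
next
  case (insert k S)
  then obtain a' :: "'n \<Rightarrow> 'a" where det_a': "det (\<chi> i j. a' i \<bullet> a' j) = det (\<chi> i j. a i \<bullet> a j)"
    and norm_a': "\<forall>i. norm (a' i) \<le> norm (a i)"
    and orth_a': "\<forall>i\<in>S. \<forall>j. j \<noteq> i \<longrightarrow> a' i \<bullet> a' j = 0"
    by blast
  obtain y z where y_span: "y \<in> span {a' j | j. j \<noteq> k}"
    and z_orth: "\<And>w. w \<in> span {a' j | j. j \<noteq> k} \<Longrightarrow> orthogonal z w" and "a' k = y + z"
    using orthogonal_subspace_decomp_exists by blast
  \<comment> \<open>one Gram--Schmidt step: replace \<open>a' k\<close> by its component \<open>z\<close> orthogonal to the other vectors\<close>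
  define a'' where "a'' = a'(k := a' k - y)"
  have "a'' k = z"
    using \<open>a' k = y + z\<close> by (simp add: a''_def)
  have "det (\<chi> i j. a'' i \<bullet> a'' j) = det (\<chi> i j. a' i \<bullet> a'' j)"
    unfolding a''_def by (rule det_inner_matrix_subtract_span[OF y_span])
  also have "\<dots> = det (transpose (\<chi> i j. a' i \<bullet> a'' j))"
    by simp
  also have "transpose (\<chi> i j. a' i \<bullet> a'' j) = (\<chi> i j. a'' i \<bullet> a' j)"
    by (simp add: transpose_def inner_commute)
  also have "det (\<chi> i j. a'' i \<bullet> a' j) = det (\<chi> i j. a' i \<bullet> a' j)"
    unfolding a''_def by (rule det_inner_matrix_subtract_span[OF y_span])
  finally have det_a'': "det (\<chi> i j. a'' i \<bullet> a'' j) = det (\<chi> i j. a i \<bullet> a j)"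
    using det_a' by simp
  have "y \<bullet> z = 0"
    using z_orth[OF y_span] by (simp add: orthogonal_def inner_commute)
  then have "norm (a' k) ^ 2 = norm y ^ 2 + norm z ^ 2"
    using \<open>a' k = y + z\<close> by (simp add: norm_add_Pythagorean orthogonal_def)
  then have "norm z \<le> norm (a' k)"
    by (simp add: power2_le_imp_le)
  then have "norm (a'' i) \<le> norm (a' i)" for i
    using \<open>a'' k = z\<close> by (cases "i = k") (simp_all add: a''_def)
  then have norm_a'': "\<forall>i. norm (a'' i) \<le> norm (a i)"
    using norm_a' order_trans by blast
  have z_orth_a': "z \<bullet> a' j = 0" if "j \<noteq> k" for j
    using z_orth[of "a' j"] that by (auto simp: orthogonal_def intro: span_base)
  have "\<forall>i\<in>insert k S. \<forall>j. j \<noteq> i \<longrightarrow> a'' i \<bullet> a'' j = 0"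
    using orth_a' z_orth_a' \<open>a'' k = z\<close> \<open>k \<notin> S\<close>
    by (simp add: a''_def) (metis inner_commute)
  with det_a'' norm_a'' show ?case
    by blast
qed

lemma det_inner_matrix_le_prod_norm:
  fixes a :: "'n::finite \<Rightarrow> 'a::euclidean_space"
  shows "det (\<chi> i j. a i \<bullet> a j) \<le> (\<Prod>i\<in>UNIV. norm (a i) ^ 2)"
proof -
  obtain a' :: "'n \<Rightarrow> 'a" where det_a': "det (\<chi> i j. a' i \<bullet> a' j) = det (\<chi> i j. a i \<bullet> a j)"
    and norm_a': "\<forall>i. norm (a' i) \<le> norm (a i)"
    and orth_a': "\<forall>i j. j \<noteq> i \<longrightarrow> a' i \<bullet> a' j = 0"
    using det_inner_matrix_self_orthogonalize[of a UNIV] by blast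
  have "det (\<chi> i j. a' i \<bullet> a' j) = (\<Prod>i\<in>UNIV. norm (a' i) ^ 2)"
    using orth_a' by (subst det_diagonal) (auto simp: power2_norm_eq_inner)
  also have "\<dots> \<le> (\<Prod>i\<in>UNIV. norm (a i) ^ 2)"
    using norm_a' by (intro prod_mono) (auto intro: power_mono)
  finally show ?thesis
    using det_a' by simp
qed

lemma power2_norm_vec: "norm (x :: 'a::real_normed_vector^'n) ^ 2 = (\<Sum>i\<in>UNIV. norm (x $ i) ^ 2)"
  by (simp add: norm_vec_def L2_set_def sum_nonneg)

lemma frob_norm_eq_norm: "frob_norm A = norm A"
  by (simp add: frob_norm_def norm_vec_def L2_set_def sum_nonneg)

lemma local_vol_le_norm_power:
  fixes J :: "real^'m^'N"
  shows "local_vol J \<le> real CARD('N) powr (- real CARD('N) / 2) * norm J ^ CARD('N)"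
proof -
  let ?N = "CARD('N)"
  have "J ** transpose J = (\<chi> i j. J $ i \<bullet> J $ j)"
    by (simp add: matrix_matrix_mult_def transpose_def inner_vec_def vec_eq_iff)
  then have "det (J ** transpose J) \<le> (\<Prod>i\<in>UNIV. norm (J $ i) ^ 2)"
    by (simp add: det_inner_matrix_le_prod_norm)
  also have "\<dots> \<le> ((\<Sum>i\<in>UNIV. norm (J $ i) ^ 2) / ?N) ^ ?N"
    by (rule prod_le_mean_power) simp_all
  also have "\<dots> = (norm J ^ ?N) ^ 2 / ?N ^ ?N"
    unfolding power2_norm_vec[of J, symmetric] power_divide power_mult[symmetric]
    by (simp add: mult.commute)
  finally have "local_vol J \<le> sqrt ((norm J ^ ?N) ^ 2 / ?N ^ ?N)"
    unfolding local_vol_def by simp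
  also have "\<dots> = norm J ^ ?N / sqrt (real ?N ^ ?N)"
    unfolding real_sqrt_divide by simp
  also have "\<dots> = real ?N powr (- real ?N / 2) * norm J ^ ?N"
    unfolding minus_divide_left[symmetric] powr_minus powr_half_of_nat[OF of_nat_0_le_iff zero_less_card_finite]
    by (rule divide_inverse_commute)
  finally show ?thesis .
qed

lemma LVR_le_sum_frob_norm_power:
  fixes f :: "real^'m \<Rightarrow> 'p \<Rightarrow> real^'N"
  shows "LVR f \<theta> xs n \<le> real CARD('N) powr (- real CARD('N) / 2) / real n
           * (\<Sum>i<n. frob_norm (input_jac f \<theta> (xs i)) ^ CARD('N))"
proof -
  have "(\<Sum>i<n. local_vol (input_jac f \<theta> (xs i)))
      \<le> real CARD('N) powr (- real CARD('N) / 2) * (\<Sum>i<n. frob_norm (input_jac f \<theta> (xs i)) ^ CARD('N))"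
    unfolding sum_distrib_left frob_norm_eq_norm by (intro sum_mono local_vol_le_norm_power)
  then show ?thesis
    unfolding LVR_def by (simp add: divide_right_mono)
qed

lemma spec_norm_nonneg: "0 \<le> spec_norm W"
  unfolding spec_norm_def by (rule onorm_pos_le) simp

lemma norm_matrix_vector_mult_le_spec_norm: "norm (W *v x) \<le> spec_norm W * norm x"
  unfolding spec_norm_def by (rule onorm) simp

lemma norm_vector_matrix_mult_le_spec_norm:
  fixes W :: "real^'m^'d"
  shows "norm (v v* W) \<le> spec_norm W * norm v"
proof -
  let ?u = "v v* W"
  have "norm ?u * norm ?u = ?u \<bullet> ?u"
    by (simp add: norm_eq_sqrt_inner)
  also have "\<dots> = v \<bullet> (W *v ?u)"
    by (rule dot_lmul_matrix)
  also have "\<dots> \<le> norm v * norm (W *v ?u)"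
    by (rule norm_cauchy_schwarz)
  also have "\<dots> \<le> norm v * (spec_norm W * norm ?u)"
    by (rule mult_left_mono[OF norm_matrix_vector_mult_le_spec_norm norm_ge_zero])
  finally have "norm ?u * norm ?u \<le> (spec_norm W * norm v) * norm ?u"
    by (simp add: mult_ac)
  then show ?thesis
    using spec_norm_nonneg[of W] by (cases "?u = 0") (simp_all add: mult_le_cancel_right)
qed

lemma norm_matrix_mult_le_spec_norm:
  fixes A :: "real^'d^'N" and W :: "real^'m^'d"
  shows "norm (A ** W) \<le> norm A * spec_norm W"
proof (rule power2_le_imp_le)
  have "(A ** W) $ i = A $ i v* W" for i
    by (simp add: matrix_matrix_mult_def vector_matrix_mult_def vec_eq_iff)
  then have "norm (A ** W) ^ 2 = (\<Sum>i\<in>UNIV. norm (A $ i v* W) ^ 2)"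
    by (simp add: power2_norm_vec[of "A ** W"])
  also have "\<dots> \<le> (\<Sum>i\<in>UNIV. (spec_norm W * norm (A $ i)) ^ 2)"
    by (intro sum_mono power_mono norm_vector_matrix_mult_le_spec_norm) simp
  also have "\<dots> = (norm A * spec_norm W) ^ 2"
    by (simp add: power2_norm_vec[of A] power_mult_distrib sum_distrib_left mult_ac)
  finally show "norm (A ** W) ^ 2 \<le> (norm A * spec_norm W) ^ 2" .
qed (simp add: spec_norm_nonneg)

lemma sum_power2_norm_column: "(\<Sum>i\<in>UNIV. norm (column i A) ^ 2) = norm (A :: real^'n^'m) ^ 2"
  by (simp add: power2_norm_vec column_def) (rule sum.swap)

lemma sum_Basis_vec:
  "(\<Sum>u\<in>(Basis :: ('a::euclidean_space^'n) set). f u) = (\<Sum>i\<in>UNIV. \<Sum>v\<in>Basis. f (axis i v))"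
proof -
  have "(\<Sum>u\<in>(\<Union>i. \<Union>v\<in>Basis. {axis i v}). f u) = (\<Sum>i\<in>UNIV. \<Sum>u\<in>axis i ` Basis. f u)"
    by (subst sum.UNION_disjoint) (auto simp: axis_eq_axis intro!: sum.cong)
  also have "\<dots> = (\<Sum>i\<in>UNIV. \<Sum>v\<in>Basis. f (axis i v))"
    by (intro sum.cong refl sum.reindex[unfolded comp_def]) (auto simp: inj_on_def axis_eq_axis)
  finally show ?thesis
    by (simp add: Basis_vec_def)
qed

lemma sum_Basis_norm_matrix_mult_power2:
  fixes A :: "real^'d^'N" and x :: "real^'m"
  shows "(\<Sum>u\<in>(Basis :: (real^'m^'d) set). norm (A *v (u *v x)) ^ 2) = norm x ^ 2 * norm A ^ 2"
proof -
  have "A *v (axis i (axis j 1) *v x) = x $ j *\<^sub>R column i A" for i j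
  proof -
    have "axis i (axis j 1) *v x = x $ j *\<^sub>R axis i 1"
      by (simp add: vec_eq_iff matrix_vector_mult_def axis_def if_distrib[of "\<lambda>c. c * _"] cong: if_cong)
    then show ?thesis
      by (simp add: matrix_vector_mult_scaleR matrix_vector_mult_basis)
  qed
  then have "(\<Sum>u\<in>(Basis :: (real^'m^'d) set). norm (A *v (u *v x)) ^ 2)
      = (\<Sum>i\<in>UNIV. \<Sum>j\<in>UNIV. (x $ j) ^ 2 * norm (column i A) ^ 2)"
    by (simp add: sum_Basis_vec power_mult_distrib)
  also have "\<dots> = (\<Sum>j\<in>UNIV. (x $ j) ^ 2) * (\<Sum>i\<in>UNIV. norm (column i A) ^ 2)"
    unfolding sum_product by (rule sum.swap)
  also have "\<dots> = norm x ^ 2 * norm A ^ 2"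
    by (simp add: power2_norm_vec[of x] sum_power2_norm_column)
  finally show ?thesis .
qed

section \<open>Sharpness at an interpolating parameter\<close>

lemma has_real_derivative_half_power2_norm_residual:
  fixes F :: "'p::real_normed_vector \<Rightarrow> 'b::real_inner"
  assumes F_deriv: "\<And>\<theta>. (F has_derivative blinfun_apply (D \<theta>)) (at \<theta>)"
  shows "((\<lambda>t. (1/2) * (norm (F (\<theta>0 + t *\<^sub>R b) - y))\<^sup>2) has_real_derivative
          (F (\<theta>0 + s *\<^sub>R b) - y) \<bullet> D (\<theta>0 + s *\<^sub>R b) b) (at s)"
proof -
  let ?r = "\<lambda>t. F (\<theta>0 + t *\<^sub>R b) - y" and ?v = "D (\<theta>0 + s *\<^sub>R b) b"
  have "((\<lambda>t. \<theta>0 + t *\<^sub>R b) has_derivative (\<lambda>t. t *\<^sub>R b)) (at s)"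
    by (auto intro!: derivative_eq_intros)
  from has_derivative_compose[OF this F_deriv]
  have r_deriv: "(?r has_derivative (\<lambda>t. t *\<^sub>R ?v)) (at s)"
    by (auto intro!: derivative_eq_intros simp: blinfun.scaleR_right)
  have "((\<lambda>t. (1/2) * (?r t \<bullet> ?r t)) has_derivative (\<lambda>h. (1/2) * (?r s \<bullet> (h *\<^sub>R ?v) + (h *\<^sub>R ?v) \<bullet> ?r s))) (at s)"
    by (intro has_derivative_mult_right has_derivative_inner r_deriv)
  then show ?thesis
    unfolding has_field_derivative_def power2_norm_eq_inner
    by (rule has_derivative_eq_rhs) (auto simp: inner_commute algebra_simps fun_eq_iff)
qed

lemma has_real_derivative_residual_inner_at_zero:
  fixes F :: "'p::real_normed_vector \<Rightarrow> 'b::real_inner"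
  assumes F_deriv: "\<And>\<theta>. (F has_derivative blinfun_apply (D \<theta>)) (at \<theta>)"
    and "D differentiable (at \<theta>0)" and "F \<theta>0 = y"
  shows "((\<lambda>s. (F (\<theta>0 + s *\<^sub>R b) - y) \<bullet> D (\<theta>0 + s *\<^sub>R b) b) has_real_derivative
          (norm (D \<theta>0 b))\<^sup>2) (at 0)"
proof -
  let ?r = "\<lambda>t. F (\<theta>0 + t *\<^sub>R b) - y"
  have path: "((\<lambda>t. \<theta>0 + t *\<^sub>R b) has_derivative (\<lambda>t. t *\<^sub>R b)) (at 0)"
    by (auto intro!: derivative_eq_intros)
  from has_derivative_compose[OF path F_deriv]
  have r_deriv: "(?r has_derivative (\<lambda>t. t *\<^sub>R D \<theta>0 b)) (at 0)"
    by (auto intro!: derivative_eq_intros simp: blinfun.scaleR_right)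
  obtain D' where "(D has_derivative D') (at (\<theta>0 + 0 *\<^sub>R b))"
    using \<open>D differentiable (at \<theta>0)\<close> by (auto simp: differentiable_def)
  from has_derivative_compose[OF path this]
  have v_deriv: "((\<lambda>t. D (\<theta>0 + t *\<^sub>R b) b) has_derivative (\<lambda>t. D' (t *\<^sub>R b) b)) (at 0)"
    by (rule bounded_linear.has_derivative[OF bounded_bilinear.bounded_linear_left[OF bounded_bilinear_blinfun_apply]])
  \<comment> \<open>the term containing the second derivative \<open>D'\<close> is multiplied by the residual, which vanishes\<close>
  from has_derivative_inner[OF r_deriv v_deriv]
  show ?thesis
    unfolding has_field_derivative_def
    by (rule has_derivative_eq_rhs) (simp add: \<open>F \<theta>0 = y\<close> fun_eq_iff power2_norm_eq_inner mult.commute)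
qed

lemma second_directional_deriv_quad_loss:
  fixes f :: "'x \<Rightarrow> 'p::real_normed_vector \<Rightarrow> 'b::real_inner"
  assumes F_deriv: "\<And>i \<theta>. i < n \<Longrightarrow> (f (xs i) has_derivative blinfun_apply (D i \<theta>)) (at \<theta>)"
    and D_diff: "\<And>i. i < n \<Longrightarrow> D i differentiable (at \<theta>0)"
    and interp: "\<And>i. i < n \<Longrightarrow> f (xs i) \<theta>0 = ys i"
  shows "deriv (\<lambda>s. deriv (\<lambda>t. (1 / real n) * (\<Sum>i<n. (1/2) * (norm (f (xs i) (\<theta>0 + t *\<^sub>R b) - ys i))\<^sup>2)) s) 0
       = (1 / real n) * (\<Sum>i<n. (norm (D i \<theta>0 b))\<^sup>2)"
proof -
  define \<phi> where "\<phi> s = (1 / real n) * (\<Sum>i<n. (f (xs i) (\<theta>0 + s *\<^sub>R b) - ys i) \<bullet> D i (\<theta>0 + s *\<^sub>R b) b)" for s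
  have "((\<lambda>t. (1 / real n) * (\<Sum>i<n. (1/2) * (norm (f (xs i) (\<theta>0 + t *\<^sub>R b) - ys i))\<^sup>2))
      has_real_derivative \<phi> s) (at s)" for s
    unfolding \<phi>_def
    by (intro DERIV_cmult DERIV_sum has_real_derivative_half_power2_norm_residual F_deriv) simp
  then have "(\<lambda>s. deriv (\<lambda>t. (1 / real n) * (\<Sum>i<n. (1/2) * (norm (f (xs i) (\<theta>0 + t *\<^sub>R b) - ys i))\<^sup>2)) s) = \<phi>"
    by (auto simp: fun_eq_iff intro: DERIV_imp_deriv)
  moreover have "(\<phi> has_real_derivative (1 / real n) * (\<Sum>i<n. (norm (D i \<theta>0 b))\<^sup>2)) (at 0)"
    unfolding \<phi>_def
    by (intro DERIV_cmult DERIV_sum has_real_derivative_residual_inner_at_zero F_deriv D_diff interp) simp_all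
  ultimately show ?thesis
    by (simp add: DERIV_imp_deriv)
qed

lemma sharpness_at_interpolation:
  fixes f :: "real^'m \<Rightarrow> 'p::euclidean_space \<Rightarrow> real^'N"
  assumes "\<And>i \<theta>. i < n \<Longrightarrow> (f (xs i) has_derivative blinfun_apply (D i \<theta>)) (at \<theta>)"
    and "\<And>i. i < n \<Longrightarrow> D i differentiable (at \<theta>0)"
    and "\<And>i. i < n \<Longrightarrow> f (xs i) \<theta>0 = ys i"
  shows "sharpness f xs ys n \<theta>0 = (1 / real n) * (\<Sum>b\<in>Basis. \<Sum>i<n. (norm (D i \<theta>0 b))\<^sup>2)"
  unfolding sharpness_def hess_trace_def quad_loss_def
  using second_directional_deriv_quad_loss[where f = f and D = D, OF assms]
  by (simp add: sum_distrib_left)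

section \<open>Networks with a linear first layer\<close>

lemma input_jac_net:
  assumes "(\<lambda>z. g z q) differentiable (at (W *v x))"
  shows "input_jac (net g) (W, q) x = jacobian (\<lambda>z. g z q) (at (W *v x)) ** W"
proof -
  have "((\<lambda>z. W *v z) has_derivative (\<lambda>h. W *v h)) (at x)"
    by (simp add: bounded_linear_imp_has_derivative)
  from has_derivative_compose[OF this jacobian_works[THEN iffD1, OF assms]]
  have "((\<lambda>z. g (W *v z) q) has_derivative (\<lambda>h. jacobian (\<lambda>z. g z q) (at (W *v x)) *v (W *v h))) (at x)" .
  then show ?thesis
    unfolding input_jac_def jacobian_def net_def
    by (simp add: frechet_derivative_at[symmetric] matrix_vector_mul_assoc)
qed

lemma net_derivative_first_layer:
  assumes D: "(net g x has_derivative D) (at (W, q))"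
    and g_diff: "(\<lambda>z. g z q) differentiable (at (W *v x))"
  shows "D (u, 0) = jacobian (\<lambda>z. g z q) (at (W *v x)) *v (u *v x)"
proof -
  let ?A = "jacobian (\<lambda>z. g z q) (at (W *v x))"
  \<comment> \<open>differentiate \<open>t \<mapsto> net g x (W + t u, q) = g (W x + t (u x)) q\<close> at \<open>t = 0\<close> in two ways\<close>
  have "((\<lambda>t. (W, q) + t *\<^sub>R (u, 0)) has_derivative (\<lambda>t. t *\<^sub>R (u, 0))) (at 0)"
    by (auto intro!: derivative_eq_intros)
  from has_derivative_compose[OF this, of "net g x" D] D
  have deriv1: "((\<lambda>t. g (W *v x + t *\<^sub>R (u *v x)) q) has_derivative (\<lambda>t. D (t *\<^sub>R (u, 0)))) (at 0)"
    by (simp add: net_def matrix_vector_mult_add_rdistrib scaleR_matrix_vector_assoc)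
  have "((\<lambda>t. W *v x + t *\<^sub>R (u *v x)) has_derivative (\<lambda>t. t *\<^sub>R (u *v x))) (at 0)"
    by (auto intro!: derivative_eq_intros)
  from has_derivative_compose[OF this, of "\<lambda>z. g z q" "\<lambda>h. ?A *v h"] g_diff
  have deriv2: "((\<lambda>t. g (W *v x + t *\<^sub>R (u *v x)) q) has_derivative (\<lambda>t. ?A *v (t *\<^sub>R (u *v x)))) (at 0)"
    by (simp add: jacobian_works)
  from has_derivative_unique[OF deriv1 deriv2]
  have "(\<lambda>t. D (t *\<^sub>R (u, 0))) = (\<lambda>t. ?A *v (t *\<^sub>R (u *v x)))" .
  from fun_cong[OF this, of 1]
  show ?thesis
    by simp
qed

lemma sharpness_net_ge_first_layer:
  fixes g :: "real^'d \<Rightarrow> 'q::euclidean_space \<Rightarrow> real^'N" and xs :: "nat \<Rightarrow> real^'m"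
    and D :: "nat \<Rightarrow> (real^'m^'d) \<times> 'q \<Rightarrow> ((real^'m^'d) \<times> 'q) \<Rightarrow>\<^sub>L (real^'N)"
  assumes g_diff: "\<And>i. i < n \<Longrightarrow> (\<lambda>z. g z q) differentiable (at (W *v xs i))"
    and D: "\<And>i \<theta>. i < n \<Longrightarrow> (net g (xs i) has_derivative blinfun_apply (D i \<theta>)) (at \<theta>)"
    and D_diff: "\<And>i. i < n \<Longrightarrow> D i differentiable (at (W, q))"
    and interp: "\<And>i. i < n \<Longrightarrow> net g (xs i) (W, q) = ys i"
  shows "(1 / real n) * (\<Sum>i<n. norm (xs i) ^ 2 * norm (jacobian (\<lambda>z. g z q) (at (W *v xs i))) ^ 2)
           \<le> sharpness (net g) xs ys n (W, q)"
proof -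
  let ?A = "\<lambda>i. jacobian (\<lambda>z. g z q) (at (W *v xs i))"
  let ?sq = "\<lambda>b. \<Sum>i<n. (norm (D i (W, q) b))\<^sup>2"
  have "?sq (u, 0) = (\<Sum>i<n. norm (?A i *v (u *v xs i)) ^ 2)" for u
    by (intro sum.cong refl) (simp add: net_derivative_first_layer[OF D g_diff])
  then have "(\<Sum>i<n. norm (xs i) ^ 2 * norm (?A i) ^ 2) = (\<Sum>u\<in>(Basis :: (real^'m^'d) set). ?sq (u, 0))"
    by (simp add: sum_Basis_norm_matrix_mult_power2 sum.swap[of _ "{..<n}"])
  also have "\<dots> = (\<Sum>b\<in>(\<lambda>u. (u, 0)) ` Basis. ?sq b)"
    by (simp add: sum.reindex inj_on_def)
  also have "\<dots> \<le> (\<Sum>b\<in>Basis. ?sq b)"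
    by (intro sum_mono2) (auto simp: Basis_prod_def intro!: sum_nonneg)
  finally show ?thesis
    using sharpness_at_interpolation[where f = "net g" and D = D, OF D D_diff interp]
    by (simp add: divide_right_mono)
qed

theorem proposition1:
  fixes g :: "real^'d \<Rightarrow> 'q::euclidean_space \<Rightarrow> real^'N"
    and xs :: "nat \<Rightarrow> real^'m" and ys :: "nat \<Rightarrow> real^'N" and n :: nat
    and \<theta>s :: "(real^'m^'d) \<times> 'q"
  assumes diff_first: "\<And>z q. (\<lambda>z. g z q) differentiable (at z)"
    and twice_diff_params: "\<And>i. i < n \<Longrightarrow>
        \<exists>D :: (real^'m^'d) \<times> 'q \<Rightarrow> (((real^'m^'d) \<times> 'q) \<Rightarrow>\<^sub>L (real^'N)).
           (\<forall>\<theta>. ((\<lambda>\<theta>. net g (xs i) \<theta>) has_derivative blinfun_apply (D \<theta>)) (at \<theta>))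
         \<and> (\<forall>\<theta>. D differentiable (at \<theta>))"
    and nonzero: "\<And>i. i < n \<Longrightarrow> xs i \<noteq> 0"
    and interp: "\<And>i. i < n \<Longrightarrow> net g (xs i) \<theta>s = ys i"
  shows "LVR (net g) \<theta>s xs n
           \<le> real CARD('N) powr (- real CARD('N) / 2) / real n
              * (\<Sum>i<n. frob_norm (input_jac (net g) \<theta>s (xs i)) ^ CARD('N))
       \<and> real CARD('N) powr (- real CARD('N) / 2) / real n
              * (\<Sum>i<n. frob_norm (input_jac (net g) \<theta>s (xs i)) ^ CARD('N))
           \<le> (1 / real n)
              * sqrt (\<Sum>i<n. spec_norm (fst \<theta>s) ^ (2 * CARD('N)) / norm (xs i) ^ (2 * CARD('N)))
              * (real n * sharpness (net g) xs ys n \<theta>s / real CARD('N)) powr (real CARD('N) / 2)"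
proof -
  obtain W q where \<theta>s: "\<theta>s = (W, q)"
    by fastforce
  obtain D :: "nat \<Rightarrow> (real^'m^'d) \<times> 'q \<Rightarrow> (((real^'m^'d) \<times> 'q) \<Rightarrow>\<^sub>L (real^'N))"
    where D: "\<And>i \<theta>. i < n \<Longrightarrow> (net g (xs i) has_derivative blinfun_apply (D i \<theta>)) (at \<theta>)"
      and D_diff: "\<And>i \<theta>. i < n \<Longrightarrow> D i differentiable (at \<theta>)"
    using twice_diff_params by metis
  let ?A = "\<lambda>i. jacobian (\<lambda>z. g z q) (at (W *v xs i))"
  let ?c = "\<lambda>i. spec_norm W ^ 2 / norm (xs i) ^ 2"
  let ?s = "\<lambda>i. norm (xs i) ^ 2 * norm (?A i) ^ 2"
  have jac_le: "norm (input_jac (net g) \<theta>s (xs i)) \<le> norm (?A i) * spec_norm W" for i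
    unfolding \<theta>s input_jac_net[OF diff_first] by (rule norm_matrix_mult_le_spec_norm)
  have "(norm (input_jac (net g) \<theta>s (xs i)))\<^sup>2 \<le> ?c i * ?s i" if "i < n" for i
    using power_mono[OF jac_le[of i] norm_ge_zero, where n = 2] nonzero[OF that]
    by (simp add: power_mult_distrib mult.commute)
  moreover have "(\<Sum>i<n. ?s i) \<le> real n * sharpness (net g) xs ys n \<theta>s"
    using sharpness_net_ge_first_layer[where xs = xs and n = n and D = D, OF diff_first D D_diff interp[unfolded \<theta>s]]
    by (cases "n = 0") (simp_all add: \<theta>s field_simps)
  ultimately have "real CARD('N) powr (- real CARD('N) / 2) * (\<Sum>i<n. norm (input_jac (net g) \<theta>s (xs i)) ^ CARD('N))
      \<le> sqrt (\<Sum>i<n. ?c i ^ CARD('N)) * (real n * sharpness (net g) xs ys n \<theta>s / CARD('N)) powr (CARD('N) / 2)"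
    by (intro powr_neg_half_mult_sum_power_le) auto
  then show ?thesis
    using LVR_le_sum_frob_norm_power[of "net g" \<theta>s xs n]
    by (simp add: \<theta>s frob_norm_eq_norm power_divide divide_right_mono flip: power_mult)
qed

end
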